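(* Let $d\ge2$ and let $\mathcal{F}\subseteq\binom{\mathbb{N}}{d}$ be a finite family which is both left-compressed and right-compressed. Then $\mathcal{F}$ is shifted.
   Context: $\mathbb{N}=\{1,2,3,\dots\}$, $\mathbb{N}_{>k}=\{k+1,k+2,\dots\}$. $\binom{S}{d}$ is the set of $d$-element subsets of $S$; elements are written $\mathbf{u}=(u_1,\ldots,u_d)$ with $u_1<\cdots<u_d$. The squashed order: $\mathbf{u}<\mathbf{v}$ iff the largest element of the symmetric difference of $\mathbf{u},\mathbf{v}$ belongs to $\mathbf{v}$. A finite family in $\binom{\mathbb{N}}{e}$ (resp. $\binom{\mathbb{N}_{>k}}{e}$) is compressed in it if it consists of the smallest elements of $\binom{\mathbb{N}}{e}$ (resp. $\binom{\mathbb{N}_{>k}}{e}$) in the squashed order. For $\mathcal{F}\subseteq\binom{\mathbb{N}}{d}$ and $k\ge1$: $\widehat{\mathcal{F}}_{1,k}=\{\widehat{\mathbf{u}}\in\binom{\mathbb{N}}{d-1}\mid \{k\}\cup\widehat{\mathbf{u}}\in\mathcal{F},\ \min\widehat{\mathbf{u}}>k\}\subseteq\binom{\mathbb{N}_{>k}}{d-1}$ and $\widehat{\mathcal{F}}_{d,k}=\{\widehat{\mathbf{u}}\in\binom{\mathbb{N}}{d-1}\mid \widehat{\mathbf{u}}\cup\{k\}\in\mathcal{F},\ \max\widehat{\mathbf{u}}<k\}$. $\mathcal{F}$ is left-compressed if $\widehat{\mathcal{F}}_{1,k}$ is compressed in $\binom{\mathbb{N}_{>k}}{d-1}$ for every $k\ge1$,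 and right-compressed if $\widehat{\mathcal{F}}_{d,k}$ is compressed in $\binom{\mathbb{N}}{d-1}$ for every $k\ge1$. The Borel order: $\mathbf{v}\le_B\mathbf{u}$ iff $v_i\le u_i$ for all $i$; $\mathcal{F}$ is shifted if $\mathbf{v}\in\mathcal{F}$ whenever $\mathbf{v}\le_B\mathbf{u}$ for some $\mathbf{u}\in\mathcal{F}$. *)

theory Defs
  imports Main
begin

definition Npos :: "nat set" where "Npos = {n. n \<ge> 1}"
definition Ngt :: "nat \<Rightarrow> nat set" where "Ngt k = {n. n > k}"

definition binom :: "nat set \<Rightarrow> nat \<Rightarrow> nat set set" where
  "binom S d = {u. u \<subseteq> S \<and> finite u \<and> card u = d}"

definition squashed_less :: "nat set \<Rightarrow> nat set \<Rightarrow> bool" where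
  "squashed_less u v \<longleftrightarrow> u \<noteq> v \<and> Max ((u - v) \<union> (v - u)) \<in> v"

definition compressed_in :: "nat set set \<Rightarrow> nat set \<Rightarrow> nat \<Rightarrow> bool" where
  "compressed_in G S e \<longleftrightarrow> finite G \<and> G \<subseteq> binom S e \<and>
     (\<forall>u\<in>G. \<forall>v\<in>binom S e. squashed_less v u \<longrightarrow> v \<in> G)"

definition left_link :: "nat set set \<Rightarrow> nat \<Rightarrow> nat set set" where
  "left_link F k = {w. insert k w \<in> F \<and> (\<forall>x\<in>w. k < x)}"

definition right_link :: "nat set set \<Rightarrow> nat \<Rightarrow> nat set set" where
  "right_link F k = {w. w \<union> {k} \<in> F \<and> (\<forall>x\<in>w. x < k)}"

definition left_compressed :: "nat set set \<Rightarrow> nat \<Rightarrow> bool" where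
  "left_compressed F d \<longleftrightarrow> (\<forall>k\<ge>1. compressed_in (left_link F k) (Ngt k) (d - 1))"

definition right_compressed :: "nat set set \<Rightarrow> nat \<Rightarrow> bool" where
  "right_compressed F d \<longleftrightarrow> (\<forall>k\<ge>1. compressed_in (right_link F k) Npos (d - 1))"

definition borel_le :: "nat set \<Rightarrow> nat set \<Rightarrow> bool" where
  "borel_le v u \<longleftrightarrow> card v = card u \<and>
     (\<forall>i < card u. sorted_list_of_set v ! i \<le> sorted_list_of_set u ! i)"

definition shifted :: "nat set set \<Rightarrow> nat \<Rightarrow> bool" where
  "shifted F d \<longleftrightarrow> (\<forall>u\<in>F. \<forall>v\<in>binom Npos d. borel_le v u \<longrightarrow> v \<in> F)"

end

theory Submission
  imports Defs
begin

text \<open>The Borel order is generated by the elementary shifts that replace one element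
  \<open>x\<close> of a set by \<open>x - 1\<close>: if \<open>v \<le>\<^sub>B u\<close> and \<open>v \<noteq> u\<close>, shifting the entry of \<open>u\<close> at
  the first position where \<open>v\<close> is strictly smaller keeps \<open>v\<close> below. Each shift strictly
  decreases the element sum, so it suffices that \<open>F\<close> is closed under elementary shifts.
  An elementary shift of \<open>u\<close> is a squashed-order descent. If \<open>x\<close> is not the minimum \<open>k\<close>
  of \<open>u\<close>, it moves \<open>u - {k}\<close> down inside the left link of \<open>F\<close> at \<open>k\<close>; if \<open>x\<close> is the
  minimum, then (as \<open>d \<ge> 2\<close>) it is not the maximum \<open>m\<close>, and the shift moves \<open>u - {m}\<close>
  down inside the right link at \<open>m\<close>.\<close>

definition shift_down :: "nat \<Rightarrow> nat set \<Rightarrow> nat set" where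
  "shift_down x u = insert (x - 1) (u - {x})"

lemma card_shift_down:
  assumes "finite u" "x \<in> u" "x - 1 \<notin> u"
  shows "card (shift_down x u) = card u"
proof -
  have "card u > 0" using assms by (auto simp: card_gt_0_iff)
  then show ?thesis using assms by (simp add: shift_down_def)
qed

lemma sum_shift_down:
  assumes "finite u" "x \<in> u" "x - 1 \<notin> u" "0 < x"
  shows "\<Sum>(shift_down x u) < \<Sum>u"
proof -
  have "\<Sum>(shift_down x u) = (x - 1) + \<Sum>(u - {x})"
    using assms by (simp add: shift_down_def)
  also have "\<dots> < x + \<Sum>(u - {x})" using assms(4) by simp
  also have "\<dots> = \<Sum>u" using assms by (simp add: sum.remove)
  finally show ?thesis .
qed

lemma squashed_less_shift_down:
  assumes "x \<in> u" "x - 1 \<notin> u" "0 < x"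
  shows "squashed_less (shift_down x u) u"
proof -
  have "(shift_down x u - u) \<union> (u - shift_down x u) = {x - 1, x}"
    using assms by (auto simp: shift_down_def)
  moreover have "Max {x - 1, x} = x" by (simp add: max_def)
  ultimately show ?thesis
    using assms by (auto simp: squashed_less_def shift_down_def)
qed

lemma shift_down_insert:
  assumes "k \<noteq> x" "k \<noteq> x - 1"
  shows "shift_down x (insert k w) = insert k (shift_down x w)"
  using assms by (auto simp: shift_down_def)

lemma compressed_in_shift_down:
  assumes G: "compressed_in G S e" and w: "w \<in> G"
    and x: "x \<in> w" "x - 1 \<notin> w" "0 < x" "x - 1 \<in> S"
  shows "shift_down x w \<in> G"
proof -
  have "w \<in> binom S e" using G w by (auto simp: compressed_in_def)
  then have "shift_down x w \<in> binom S e"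
    using x card_shift_down[of w x] by (auto simp: binom_def shift_down_def)
  then show ?thesis
    using G w squashed_less_shift_down[OF x(1-3)] by (auto simp: compressed_in_def)
qed

lemma Diff_Min_in_left_link:
  assumes "u \<in> F" "finite u" "u \<noteq> {}"
  shows "u - {Min u} \<in> left_link F (Min u)"
  using assms by (auto simp: left_link_def insert_absorb order_less_le)

lemma Diff_Max_in_right_link:
  assumes "u \<in> F" "finite u" "u \<noteq> {}"
  shows "u - {Max u} \<in> right_link F (Max u)"
  using assms by (auto simp: right_link_def insert_absorb order_less_le)

lemma shift_down_mem_if_left_right_compressed:
  assumes d: "d \<ge> 2" and FB: "F \<subseteq> binom Npos d"
    and L: "left_compressed F d" and R: "right_compressed F d"
    and u: "u \<in> F" and x: "x \<in> u" "2 \<le> x" "x - 1 \<notin> u"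
  shows "shift_down x u \<in> F"
proof -
  have fu: "finite u" "card u = d" "u \<subseteq> Npos" using FB u by (auto simp: binom_def)
  have ne: "u \<noteq> {}" using x by auto
  show ?thesis
  proof (cases "x = Min u")
    case False
    define k where "k = Min u"
    have k: "k \<in> u" "k < x" using fu ne x(1) False by (auto simp: k_def order_less_le)
    then have "k < x - 1" using x(3) by (cases "k = x - 1") auto
    moreover have "compressed_in (left_link F k) (Ngt k) (d - 1)"
      using L k(1) fu(3) by (auto simp: left_compressed_def Npos_def)
    moreover have "u - {k} \<in> left_link F k"
      unfolding k_def using Diff_Min_in_left_link[OF u fu(1) ne] .
    ultimately have "shift_down x (u - {k}) \<in> left_link F k"
      using x k by (intro compressed_in_shift_down) (auto simp: Ngt_def)
    then have "insert k (shift_down x (u - {k})) \<in> F" by (simp add: left_link_def)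
    moreover have "insert k (u - {k}) = u" using k(1) by auto
    ultimately show ?thesis
      using shift_down_insert[of k x "u - {k}"] k \<open>k < x - 1\<close> by simp
  next
    case True
    define m where "m = Max u"
    have m: "m \<in> u" "x < m"
    proof -
      show "m \<in> u" using fu ne by (simp add: m_def)
      show "x < m"
      proof (rule ccontr)
        assume "\<not> x < m"
        moreover have "x \<le> y \<and> y \<le> m" if "y \<in> u" for y
          using fu that True by (simp add: m_def)
        ultimately have "u \<subseteq> {x}" by fastforce
        then have "card u \<le> 1" using card_mono[of "{x}" u] by simp
        then show False using fu d by simp
      qed
    qed
    have "compressed_in (right_link F m) Npos (d - 1)"
      using R m(1) fu(3) by (auto simp: right_compressed_def Npos_def)
    moreover have "u - {m} \<in> right_link F m"
      unfolding m_def using Diff_Max_in_right_link[OF u fu(1) ne] .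
    ultimately have "shift_down x (u - {m}) \<in> right_link F m"
      using x m by (intro compressed_in_shift_down) (auto simp: Npos_def)
    then have "insert m (shift_down x (u - {m})) \<in> F" by (simp add: right_link_def)
    moreover have "insert m (u - {m}) = u" using m(1) by auto
    ultimately show ?thesis
      using shift_down_insert[of m x "u - {m}"] m by simp
  qed
qed

lemma sorted_list_of_set_shift_down:
  fixes u :: "nat set"
  assumes u: "finite u" and i: "i < card u" and x: "x = sorted_list_of_set u ! i"
    and x': "x - 1 \<notin> u"
  shows "sorted_list_of_set (shift_down x u) = (sorted_list_of_set u)[i := x - 1]"
proof -
  define U where "U = sorted_list_of_set u"
  have U: "sorted_wrt (<) U" "length U = card u" "set U = u"
    using u by (simp_all add: U_def)
  have U_less: "U ! j < U ! l" if "j < l" "l < card u" for j l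
    using U that by (simp add: sorted_wrt_iff_nth_less)
  have "sorted_wrt (<) (U[i := x - 1])"
    unfolding sorted_wrt_iff_nth_less
  proof (intro allI impI)
    fix j l assume jl: "j < l" "l < length (U[i := x - 1])"
    show "U[i := x - 1] ! j < U[i := x - 1] ! l"
    proof (cases "l = i")
      case True
      have "U ! j \<noteq> x - 1" using x' U jl by (metis nth_mem order.strict_trans length_list_update)
      then show ?thesis using True jl U_less[of j i] i x by (simp add: U_def)
    next
      case False
      then have "U[i := x - 1] ! l = U ! l" by simp
      moreover have "U[i := x - 1] ! j \<le> U ! j"
        using x \<open>j < l\<close> \<open>l < length (U[i := x - 1])\<close> by (cases "j = i") (simp_all add: U_def)
      ultimately show ?thesis using U_less[of j l] jl U(2) by simp
    qed
  qed
  moreover have "set (U[i := x - 1]) = shift_down x u"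
    using set_update_distinct[of U i "x - 1"] U i x
    by (simp add: U_def shift_down_def distinct_sorted_list_of_set)
  ultimately show ?thesis
    unfolding U_def
    by (metis sorted_list_of_set.idem_if_sorted_distinct strict_sorted_iff)
qed

lemma borel_le_shift_down_step:
  assumes fin: "finite u" "finite v" and vN: "v \<subseteq> Npos"
    and b: "borel_le v u" and ne: "v \<noteq> u"
  obtains x where "x \<in> u" "2 \<le> x" "x - 1 \<notin> u" "borel_le v (shift_down x u)"
proof -
  define U where "U = sorted_list_of_set u"
  define V where "V = sorted_list_of_set v"
  define n where "n = card u"
  have U: "length U = n" "set U = u" "sorted U" using fin by (simp_all add: U_def n_def)
  have V: "length V = n" "set V = v" "sorted_wrt (<) V"
    using fin b by (simp_all add: V_def n_def borel_le_def)
  have le: "V ! j \<le> U ! j" if "j < n" for j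
    using b that by (simp add: borel_le_def U_def V_def n_def)
  have "\<exists>i < n. V ! i < U ! i"
  proof (rule ccontr)
    assume "\<not> ?thesis"
    then have "V ! j = U ! j" if "j < n" for j using le[OF that] that by (meson not_less order_antisym)
    then have "V = U" using U V by (intro nth_equalityI) simp_all
    then show False using U V ne by simp
  qed
  then obtain i where i: "i < n" "V ! i < U ! i" and minimal: "\<And>j. j < i \<Longrightarrow> \<not> (j < n \<and> V ! j < U ! j)"
    unfolding exists_least_iff[of "\<lambda>i. i < n \<and> V ! i < U ! i"] by blast
  have below: "V ! j = U ! j" if "j < i" for j
    using minimal[OF that] le[of j] that i(1) by simp
  define x where "x = U ! i"
  have xu: "x \<in> u" using i U by (auto simp: x_def)
  have "V ! i \<in> Npos" using i V vN by (metis nth_mem subsetD)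
  then have x2: "2 \<le> x" using i by (simp add: x_def Npos_def)
  have xn: "x - 1 \<notin> u"
  proof
    assume "x - 1 \<in> u"
    then obtain j where j: "j < n" "U ! j = x - 1" using U by (metis in_set_conv_nth)
    have "\<not> i \<le> j"
    proof
      assume "i \<le> j"
      then have "x \<le> U ! j" using sorted_nth_mono[OF U(3)] j(1) U(1) by (simp add: x_def)
      then show False using j(2) x2 by simp
    qed
    then have "j < i" by simp
    then have "V ! j < V ! i" using i V by (simp add: sorted_wrt_iff_nth_less)
    then show False using below[OF \<open>j < i\<close>] j i by (simp add: x_def)
  qed
  have "sorted_list_of_set (shift_down x u) = U[i := x - 1]"
    using sorted_list_of_set_shift_down[OF fin(1) _ _ xn] i by (simp add: U_def n_def x_def)
  moreover have "card (shift_down x u) = n"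
    using card_shift_down[OF fin(1) xu xn] by (simp add: n_def)
  moreover have "V ! j \<le> U[i := x - 1] ! j" if "j < n" for j
    using le[OF that] i U(1) that by (auto simp: nth_list_update x_def)
  ultimately have "borel_le v (shift_down x u)"
    using V(1) by (simp add: borel_le_def V_def)
  then show ?thesis using that xu x2 xn by blast
qed

lemma shifted_if_shift_down_closed:
  assumes FB: "F \<subseteq> binom Npos d"
    and closed: "\<And>u x. u \<in> F \<Longrightarrow> x \<in> u \<Longrightarrow> 2 \<le> x \<Longrightarrow> x - 1 \<notin> u \<Longrightarrow> shift_down x u \<in> F"
  shows "shifted F d"
  unfolding shifted_def
proof (intro ballI impI)
  fix u v assume "u \<in> F" "v \<in> binom Npos d" "borel_le v u"
  then show "v \<in> F"
  proof (induction "\<Sum>u" arbitrary: u rule: less_induct)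
    case less
    show ?case
    proof (cases "v = u")
      case False
      have "finite u" using less.prems(1) FB by (auto simp: binom_def)
      moreover have "finite v" "v \<subseteq> Npos" using less.prems(2) by (auto simp: binom_def)
      ultimately obtain x where x: "x \<in> u" "2 \<le> x" "x - 1 \<notin> u" "borel_le v (shift_down x u)"
        using borel_le_shift_down_step less.prems(3) False by metis
      show ?thesis
        using less.hyps[OF sum_shift_down[OF \<open>finite u\<close> x(1,3)]] x closed less.prems by simp
    qed (use less.prems in simp)
  qed
qed

theorem lemma3p9:
  fixes F :: "nat set set" and d :: nat
  assumes "d \<ge> 2"
    and "F \<subseteq> binom Npos d"
    and "finite F"
    and "left_compressed F d"
    and "right_compressed F d"
  shows "shifted F d"
  using assms(2) by (rule shifted_if_shift_down_closed)
    (rule shift_down_mem_if_left_right_compressed[OF assms(1,2,4,5)])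

end
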